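(* Let $Z$ be a time-inhomogeneous Markov chain on $\{0,1,2,\dots\}$ which at step $t$ moves from $0$ to $0$ with probability $\alpha_{t0}$ and to $1$ with probability $1-\alpha_{t0}$, and from $i\ge1$ to $i-1$ with probability $\alpha_{ti}$ and to $i+1$ with probability $1-\alpha_{ti}$. Let $\hat Z$ be the time-homogeneous random walk on $\{0,1,2,\dots\}$ which moves from $0$ to $1$ with probability $1$ and from $i\ge1$ to $i-1$ with probability $p$ and to $i+1$ with probability $1-p$. Let $C=\{0\}$ and let $g^{(t)}_n$, $n\ge1$, be the distribution of the time of the first return to $0$ after time $t$ for $Z$ given $Z_t=0$, i.e. $g^{(t)}_n=\mathbb{P}\{Z_{t+1}\ne0,\dots,Z_{t+n-1}\ne0,Z_{t+n}=0\mid Z_t=0\}$. Assume that $p>1/2$ and $p(1-p)\ge(1-\alpha_{ti})\alpha_{sj}$ for all $t,s,i,j$. Let $f_n=\hat{\mathbb{P}}\{\hat Z_0=0,\hat Z_1\ne0,\dots,\hat Z_{n-1}\ne0,\hat Z_n=0\}$ (probability of first return to $0$ at time $n$ for $\hat Z$ started at $0$), and set $\hat g_1=1$, $\hat g_n=f_n/p$ for $n>1$. Then for all $t$ and $k$, \[G^{(t)}_k\le\hat G_k,\qquad\text{where } G^{(t)}_k=\sum_{m>k}g^{(t)}_m,\ \hat G_k=\sum_{m>k}\hat g_m.\] *)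

theory Defs
  imports Complex_Main "HOL-Library.FuncSet"
begin

definition trans_Z :: "(nat \<Rightarrow> nat \<Rightarrow> real) \<Rightarrow> nat \<Rightarrow> nat \<Rightarrow> nat \<Rightarrow> real" where
  "trans_Z \<alpha> t i j =
     (if i = 0 then (if j = 0 then \<alpha> t 0 else if j = 1 then 1 - \<alpha> t 0 else 0)
      else (if j = i - 1 then \<alpha> t i else if j = i + 1 then 1 - \<alpha> t i else 0))"

definition trans_hatZ :: "real \<Rightarrow> nat \<Rightarrow> nat \<Rightarrow> nat \<Rightarrow> real" where
  "trans_hatZ p t i j =
     (if i = 0 then (if j = 1 then 1 else 0)
      else (if j = i - 1 then p else if j = i + 1 then 1 - p else 0))"

text \<open>Computed as the sum over all paths of the product of
  transition probabilities; paths of such a chain started at 0 stay in {0..n}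
  during n steps, so the path sum is over {..n}-valued paths.\<close>
definition first_return :: "(nat \<Rightarrow> nat \<Rightarrow> nat \<Rightarrow> real) \<Rightarrow> nat \<Rightarrow> nat \<Rightarrow> real" where
  "first_return P t n =
     (\<Sum>x\<in>{x \<in> PiE {..n} (\<lambda>_. {..n}). x 0 = 0 \<and> x n = 0 \<and> (\<forall>k\<in>{1..<n}. x k \<noteq> 0)}.
        \<Prod>k<n. P (t + k) (x k) (x (Suc k)))"

definition g_Z :: "(nat \<Rightarrow> nat \<Rightarrow> real) \<Rightarrow> nat \<Rightarrow> nat \<Rightarrow> real" where
  "g_Z \<alpha> t n = first_return (trans_Z \<alpha>) t n"

definition f_hat :: "real \<Rightarrow> nat \<Rightarrow> real" where
  "f_hat p n = first_return (trans_hatZ p) 0 n"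

definition g_hat :: "real \<Rightarrow> nat \<Rightarrow> real" where
  "g_hat p n = (if n = 1 then 1 else f_hat p n / p)"

definition G_Z :: "(nat \<Rightarrow> nat \<Rightarrow> real) \<Rightarrow> nat \<Rightarrow> nat \<Rightarrow> real" where
  "G_Z \<alpha> t k = (\<Sum>j. g_Z \<alpha> t (k + 1 + j))"

definition G_hat :: "real \<Rightarrow> nat \<Rightarrow> real" where
  "G_hat p k = (\<Sum>j. g_hat p (k + 1 + j))"

end

theory Submission
  imports Defs
begin

text \<open>Both first-return probabilities are sums over return paths of products of transition
  probabilities, so it suffices to compare the paths one by one. With the potential \<open>\<rho> ^ i\<close>, the
  hypothesis \<open>(1 - \<alpha> t i) * \<alpha> s j \<le> p * (1 - p)\<close> yields the stepwise bounds
  \<open>1 - \<alpha> t i \<le> (1 - p) * \<rho>\<close> and \<open>\<alpha> t i * \<rho> \<le> p\<close>; as the potential telescopes along a path from 0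
  back to 0, every return path of \<open>Z\<close> of length \<open>n \<ge> 2\<close> is at most \<open>1 - p \<le> 1 / p\<close> times as likely
  as for \<open>\<hat>Z\<close>. The same comparison with a potential \<open>\<mu> ^ i\<close> bounds \<open>\<hat>Z\<close> by a walk whose
  two steps both have weight \<open>c < 1/2\<close>, so \<open>f n \<le> K * (2 * c) ^ n\<close> and the tail sums of \<open>\<hat>g\<close>
  converge.\<close>

text \<open>At \<open>i = 0\<close> the truncated subtraction gives \<open>i - 1 = 0\<close>, so \<open>d\<close> is the holding probability
  at 0, exactly as in \<open>trans_Z\<close>.\<close>

definition birth_death_kernel :: "real \<Rightarrow> real \<Rightarrow> nat \<Rightarrow> nat \<Rightarrow> real" where
  "birth_death_kernel d u i j = (if j = i - 1 then d else if j = i + 1 then u else 0)"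

lemma birth_death_kernel_nonneg:
  "0 \<le> d \<Longrightarrow> 0 \<le> u \<Longrightarrow> 0 \<le> birth_death_kernel d u i j"
  by (simp add: birth_death_kernel_def)

lemma sum_birth_death_kernel_le:
  assumes "finite V" "0 \<le> d" "0 \<le> u"
  shows "(\<Sum>j\<in>V. birth_death_kernel d u i j) \<le> d + u"
proof -
  have "(\<Sum>j\<in>V. birth_death_kernel d u i j)
      \<le> (\<Sum>j\<in>V. (if j = i - 1 then d else 0) + (if j = i + 1 then u else 0))"
    by (rule sum_mono) (use assms in \<open>auto simp: birth_death_kernel_def\<close>)
  also have "\<dots> \<le> d + u"
    using assms by (simp add: sum.distrib)
  finally show ?thesis .
qed

lemma birth_death_kernel_weighted_le:
  assumes "0 < i" "0 < \<rho>" "d * \<rho> \<le> d'" "u \<le> u' * \<rho>"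
  shows "birth_death_kernel d u i j * \<rho> ^ i \<le> birth_death_kernel d' u' i j * \<rho> ^ j"
proof -
  obtain m where i: "i = Suc m" using \<open>0 < i\<close> gr0_implies_Suc by blast
  have "d * \<rho> ^ i \<le> d' * \<rho> ^ m"
    using mult_right_mono[OF \<open>d * \<rho> \<le> d'\<close>, of "\<rho> ^ m"] \<open>0 < \<rho>\<close> by (simp add: i mult.assoc)
  moreover have "u * \<rho> ^ i \<le> u' * \<rho> ^ Suc i"
    using mult_right_mono[OF \<open>u \<le> u' * \<rho>\<close>, of "\<rho> ^ i"] \<open>0 < \<rho>\<close> by (simp add: mult.assoc)
  ultimately show ?thesis
    by (auto simp: birth_death_kernel_def i)
qed

lemma trans_Z_eq_birth_death_kernel:
  "trans_Z \<alpha> t i j = birth_death_kernel (\<alpha> t i) (1 - \<alpha> t i) i j"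
  by (simp add: trans_Z_def birth_death_kernel_def)

lemma trans_hatZ_eq_birth_death_kernel:
  "0 < i \<Longrightarrow> trans_hatZ p t i j = birth_death_kernel p (1 - p) i j"
  by (simp add: trans_hatZ_def birth_death_kernel_def)

lemma sum_PiE_insert:
  fixes f :: "('a \<Rightarrow> 'b) \<Rightarrow> 'c::comm_monoid_add"
  assumes "a \<notin> I"
  shows "(\<Sum>x\<in>PiE (insert a I) A. f x) = (\<Sum>y\<in>A a. \<Sum>g\<in>PiE I A. f (g(a := y)))"
  unfolding PiE_insert_eq
  by (subst sum.reindex[OF inj_combinator[OF assms]]) (simp add: sum.cartesian_product prod.case_distrib)

lemma sum_paths_le_pow:
  fixes w :: "nat \<Rightarrow> nat \<Rightarrow> nat \<Rightarrow> real" and \<beta> :: "nat \<Rightarrow> real"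
  assumes V: "finite V" and w_nonneg: "\<And>k i j. 0 \<le> w k i j"
    and row: "\<And>k i. (\<Sum>j\<in>V. w k i j) \<le> r" and "0 \<le> r" and \<beta>_nonneg: "\<And>i. 0 \<le> \<beta> i"
  shows "(\<Sum>x\<in>PiE {..n} (\<lambda>_. V). \<beta> (x 0) * (\<Prod>k<n. w k (x k) (x (Suc k))))
    \<le> r ^ n * (\<Sum>i\<in>V. \<beta> i)"
proof (induction n)
  case 0
  have "{..0::nat} = insert 0 {}" by auto
  then show ?case by (simp add: sum_PiE_insert)
next
  case (Suc n)
  let ?F = "\<lambda>x. \<beta> (x 0) * (\<Prod>k<n. w k (x k) (x (Suc k)))"
  have "{..Suc n} = insert (Suc n) {..n}" by auto
  moreover have "(\<Prod>k<n. w k ((g(Suc n := y)) k) ((g(Suc n := y)) (Suc k)))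
      = (\<Prod>k<n. w k (g k) (g (Suc k)))" for g y
    by (rule prod.cong) auto
  ultimately have "(\<Sum>x\<in>PiE {..Suc n} (\<lambda>_. V). \<beta> (x 0) * (\<Prod>k<Suc n. w k (x k) (x (Suc k))))
      = (\<Sum>y\<in>V. \<Sum>g\<in>PiE {..n} (\<lambda>_. V). ?F g * w n (g n) y)"
    by (simp add: sum_PiE_insert mult.assoc)
  also have "\<dots> = (\<Sum>g\<in>PiE {..n} (\<lambda>_. V). ?F g * (\<Sum>y\<in>V. w n (g n) y))"
    by (simp add: sum_distrib_left sum.swap[of _ V])
  also have "\<dots> \<le> (\<Sum>g\<in>PiE {..n} (\<lambda>_. V). ?F g * r)"
    by (intro sum_mono mult_left_mono row mult_nonneg_nonneg prod_nonneg \<beta>_nonneg w_nonneg)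
  also have "\<dots> = r * (\<Sum>g\<in>PiE {..n} (\<lambda>_. V). ?F g)"
    by (simp add: sum_distrib_left mult.commute)
  also have "\<dots> \<le> r * (r ^ n * (\<Sum>i\<in>V. \<beta> i))"
    by (rule mult_left_mono[OF Suc.IH \<open>0 \<le> r\<close>])
  finally show ?case by simp
qed

definition return_paths :: "nat \<Rightarrow> (nat \<Rightarrow> nat) set" where
  "return_paths n =
     {x \<in> PiE {..n} (\<lambda>_. {..n}). x 0 = 0 \<and> x n = 0 \<and> (\<forall>k\<in>{1..<n}. x k \<noteq> 0)}"

lemma first_return_eq:
  "first_return P t n = (\<Sum>x\<in>return_paths n. \<Prod>k<n. P (t + k) (x k) (x (Suc k)))"
  by (simp add: first_return_def return_paths_def)

lemma return_pathsD:
  assumes "x \<in> return_paths n"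
  shows "x 0 = 0" "x n = 0" "\<And>k. 0 < k \<Longrightarrow> k < n \<Longrightarrow> x k \<noteq> 0"
  using assms by (auto simp: return_paths_def)

lemma first_return_nonneg:
  "(\<And>s i j. 0 \<le> P s i j) \<Longrightarrow> 0 \<le> first_return P t n"
  unfolding first_return_eq by (intro sum_nonneg prod_nonneg) auto

lemma first_return_le_pow:
  fixes P :: "nat \<Rightarrow> nat \<Rightarrow> nat \<Rightarrow> real"
  assumes P_nonneg: "\<And>s i j. 0 \<le> P s i j" and row: "\<And>s i. (\<Sum>j\<le>n. P s i j) \<le> r" and "0 \<le> r"
  shows "first_return P t n \<le> r ^ n"
proof -
  let ?\<delta> = "\<lambda>i::nat. if i = 0 then 1 else 0 :: real"
  let ?W = "\<lambda>x. \<Prod>k<n. P (t + k) (x k) (x (Suc k))"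
  have "first_return P t n = (\<Sum>x\<in>return_paths n. ?\<delta> (x 0) * ?W x)"
    by (simp add: first_return_eq return_paths_def)
  also have "\<dots> \<le> (\<Sum>x\<in>PiE {..n} (\<lambda>_. {..n}). ?\<delta> (x 0) * ?W x)"
    by (rule sum_mono2) (auto simp: return_paths_def P_nonneg prod_nonneg intro: finite_PiE)
  also have "\<dots> \<le> r ^ n * (\<Sum>i\<le>n. ?\<delta> i)"
    by (rule sum_paths_le_pow) (use P_nonneg row \<open>0 \<le> r\<close> in auto)
  finally show ?thesis by simp
qed

lemma prod_le_prod_weighted:
  fixes a b w :: "nat \<Rightarrow> real"
  assumes w_pos: "\<And>k. 0 < w k" and "w n = w 0"
    and a_nonneg: "\<And>k. k < n \<Longrightarrow> 0 \<le> a k"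
    and step: "\<And>k. k < n \<Longrightarrow> a k * w k \<le> b k * w (Suc k)"
  shows "(\<Prod>k<n. a k) \<le> (\<Prod>k<n. b k)"
proof -
  have "(\<Prod>k<n. a k) * (\<Prod>k<n. w k) = (\<Prod>k<n. a k * w k)"
    by (simp add: prod.distrib)
  also have "\<dots> \<le> (\<Prod>k<n. b k * w (Suc k))"
    by (rule prod_mono) (use a_nonneg w_pos step in \<open>auto intro: mult_nonneg_nonneg less_imp_le\<close>)
  also have "\<dots> = (\<Prod>k<n. b k) * (\<Prod>k<n. w k)"
  proof -
    have "(\<Prod>k<n. w (Suc k)) = (\<Prod>k<n. w k)"
      using prod.lessThan_Suc_shift[of w n] \<open>w n = w 0\<close> w_pos[of 0] by (auto simp: mult.commute)
    then show ?thesis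
      by (simp add: prod.distrib)
  qed
  finally show ?thesis
    using w_pos by (simp add: prod_pos)
qed

text \<open>The potential \<open>\<rho> ^ x k\<close> telescopes along a path returning to 0, so stepwise comparisons of
  weighted transition probabilities multiply up; the first step, which leaves 0, may carry an
  extra factor \<open>\<kappa>\<close>.\<close>

lemma return_path_prod_le:
  fixes P Q :: "nat \<Rightarrow> nat \<Rightarrow> nat \<Rightarrow> real"
  assumes x: "x \<in> return_paths n" and "0 < n" and "0 < \<rho>"
    and P_nonneg: "\<And>k i j. 0 \<le> P k i j"
    and start: "P 0 0 (x 1) \<le> \<kappa> * Q 0 0 (x 1) * \<rho> ^ x 1"
    and step: "\<And>k i j. 0 < i \<Longrightarrow> P k i j * \<rho> ^ i \<le> Q k i j * \<rho> ^ j"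
  shows "(\<Prod>k<n. P k (x k) (x (Suc k))) \<le> \<kappa> * (\<Prod>k<n. Q k (x k) (x (Suc k)))"
proof -
  let ?c = "\<lambda>k::nat. if k = 0 then \<kappa> else 1"
  have "(\<Prod>k<n. P k (x k) (x (Suc k))) \<le> (\<Prod>k<n. ?c k * Q k (x k) (x (Suc k)))"
  proof (rule prod_le_prod_weighted[where w = "\<lambda>k. \<rho> ^ x k"])
    fix k assume "k < n"
    show "P k (x k) (x (Suc k)) * \<rho> ^ x k \<le> ?c k * Q k (x k) (x (Suc k)) * \<rho> ^ x (Suc k)"
      using start step[of "x k"] return_pathsD[OF x] \<open>k < n\<close> by (cases "k = 0") auto
  qed (use return_pathsD[OF x] \<open>0 < \<rho>\<close> P_nonneg in auto)
  also have "\<dots> = \<kappa> * (\<Prod>k<n. Q k (x k) (x (Suc k)))"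
    using \<open>0 < n\<close> by (simp add: prod.distrib)
  finally show ?thesis .
qed

lemma trans_Z_nonneg: "(\<And>t i. 0 \<le> \<alpha> t i \<and> \<alpha> t i \<le> 1) \<Longrightarrow> 0 \<le> trans_Z \<alpha> t i j"
  by (simp add: trans_Z_eq_birth_death_kernel birth_death_kernel_nonneg)

lemma trans_hatZ_nonneg: "0 \<le> p \<Longrightarrow> p \<le> 1 \<Longrightarrow> 0 \<le> trans_hatZ p t i j"
  by (simp add: trans_hatZ_def)

lemma g_Z_le_1:
  assumes "\<And>t i. 0 \<le> \<alpha> t i \<and> \<alpha> t i \<le> 1"
  shows "g_Z \<alpha> t n \<le> 1"
  unfolding g_Z_def
proof (rule first_return_le_pow[where r = 1, simplified])
  show "0 \<le> trans_Z \<alpha> s i j" for s i j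
    using assms by (rule trans_Z_nonneg)
  show "(\<Sum>j\<le>n. trans_Z \<alpha> s i j) \<le> 1" for s i
    using sum_birth_death_kernel_le[of "{..n}" "\<alpha> s i" "1 - \<alpha> s i" i] assms[of s i]
    by (simp add: trans_Z_eq_birth_death_kernel)
qed

lemma exists_comparison_potential:
  fixes \<alpha> :: "nat \<Rightarrow> nat \<Rightarrow> real"
  assumes alpha_prob: "\<And>t i. 0 \<le> \<alpha> t i \<and> \<alpha> t i \<le> 1"
    and "0 < p" "p < 1"
    and cond: "\<And>t s i j. (1 - \<alpha> t i) * \<alpha> s j \<le> p * (1 - p)"
  obtains \<rho> where "0 < \<rho>" "\<And>t i. 1 - \<alpha> t i \<le> (1 - p) * \<rho>" "\<And>t i. \<alpha> t i * \<rho> \<le> p"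
proof
  define S where "S = {(1 - \<alpha> t i) / (1 - p) | t i. True}"
  have S_bdd: "bdd_above S"
    unfolding S_def using alpha_prob \<open>p < 1\<close>
    by (intro bdd_aboveI[of _ "1 / (1 - p)"]) (auto intro: divide_right_mono)
  define \<rho> where "\<rho> = max p (Sup S)"
  show "0 < \<rho>"
    using \<open>0 < p\<close> by (simp add: \<rho>_def)
  show "1 - \<alpha> t i \<le> (1 - p) * \<rho>" for t i
  proof -
    have "(1 - \<alpha> t i) / (1 - p) \<le> Sup S"
      by (rule cSup_upper[OF _ S_bdd]) (auto simp: S_def)
    also have "Sup S \<le> \<rho>"
      by (simp add: \<rho>_def)
    finally show ?thesis
      using \<open>p < 1\<close> by (simp add: pos_divide_le_eq mult.commute)
  qed
  show "\<alpha> s j * \<rho> \<le> p" for s j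
  proof (cases "\<alpha> s j = 0")
    case False
    then have "0 < \<alpha> s j" using alpha_prob[of s j] by simp
    have "Sup S \<le> p / \<alpha> s j"
    proof (rule cSup_least)
      show "S \<noteq> {}" by (auto simp: S_def)
      show "y \<le> p / \<alpha> s j" if "y \<in> S" for y
        using that cond[of _ _ s j] \<open>0 < \<alpha> s j\<close> \<open>p < 1\<close>
        by (auto simp: S_def divide_le_eq le_divide_eq mult.commute)
    qed
    moreover have "\<alpha> s j * p \<le> p"
      using alpha_prob[of s j] \<open>0 < p\<close> by (simp add: mult_left_le_one_le)
    ultimately show ?thesis
      using \<open>0 < \<alpha> s j\<close> by (auto simp: \<rho>_def le_divide_eq mult.commute max_def)
  qed (use \<open>0 < p\<close> in simp)
qed

lemma return_path_trans_Z_le_potential: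
  fixes \<alpha> :: "nat \<Rightarrow> nat \<Rightarrow> real"
  assumes x: "x \<in> return_paths n" and "2 \<le> n" and "0 < \<rho>"
    and alpha_prob: "\<And>t i. 0 \<le> \<alpha> t i \<and> \<alpha> t i \<le> 1"
    and up: "\<And>t i. 1 - \<alpha> t i \<le> (1 - p) * \<rho>" and down: "\<And>t i. \<alpha> t i * \<rho> \<le> p"
  shows "(\<Prod>k<n. trans_Z \<alpha> (t + k) (x k) (x (Suc k)))
    \<le> (1 - p) * (\<Prod>k<n. trans_hatZ p k (x k) (x (Suc k)))"
proof (rule return_path_prod_le[OF x _ \<open>0 < \<rho>\<close>])
  show "0 \<le> trans_Z \<alpha> (t + k) i j" for k i j
    using alpha_prob by (rule trans_Z_nonneg)
  have "x 1 \<noteq> 0"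
    using return_pathsD(3)[OF x, of 1] \<open>2 \<le> n\<close> by simp
  then show "trans_Z \<alpha> (t + 0) 0 (x 1) \<le> (1 - p) * trans_hatZ p 0 0 (x 1) * \<rho> ^ x 1"
    using up[of t 0] by (simp add: trans_Z_def trans_hatZ_def)
  show "trans_Z \<alpha> (t + k) i j * \<rho> ^ i \<le> trans_hatZ p k i j * \<rho> ^ j" if "0 < i" for k i j
    using birth_death_kernel_weighted_le[OF that \<open>0 < \<rho>\<close> down up]
    by (simp add: trans_Z_eq_birth_death_kernel trans_hatZ_eq_birth_death_kernel[OF that])
qed (use \<open>2 \<le> n\<close> in simp)

text \<open>For \<open>p = 1\<close> no potential exists when \<open>\<alpha> = 0\<close>; instead the first step of a return path
  (up from 0) and its last step (down to 0) have probabilities whose product is at most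
  \<open>p * (1 - p) = 0\<close>.\<close>

lemma return_path_trans_Z_degenerate:
  fixes \<alpha> :: "nat \<Rightarrow> nat \<Rightarrow> real"
  assumes x: "x \<in> return_paths n" and "2 \<le> n"
    and alpha_prob: "\<And>t i. 0 \<le> \<alpha> t i \<and> \<alpha> t i \<le> 1"
    and cond: "\<And>t s i j. (1 - \<alpha> t i) * \<alpha> s j \<le> 0"
  shows "(\<Prod>k<n. trans_Z \<alpha> (t + k) (x k) (x (Suc k))) = 0"
proof -
  let ?Z = "\<lambda>k. trans_Z \<alpha> (t + k) (x k) (x (Suc k))"
  have "x 1 \<noteq> 0" "x (n - 1) \<noteq> 0" "Suc (n - 1) = n"
    using return_pathsD(3)[OF x, of 1] return_pathsD(3)[OF x, of "n - 1"] \<open>2 \<le> n\<close> by auto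
  then have "?Z 0 \<le> 1 - \<alpha> t 0" "?Z (n - 1) \<le> \<alpha> (t + (n - 1)) (x (n - 1))"
    using return_pathsD(1,2)[OF x] alpha_prob[of t 0] alpha_prob[of "t + (n - 1)" "x (n - 1)"]
    by (auto simp: trans_Z_def)
  moreover have "0 \<le> ?Z 0" "0 \<le> ?Z (n - 1)"
    using alpha_prob by (auto intro: trans_Z_nonneg)
  ultimately have "?Z 0 * ?Z (n - 1) \<le> 0"
    using cond[of t 0 "t + (n - 1)" "x (n - 1)"] by (meson mult_mono order_trans)
  then have "?Z 0 * ?Z (n - 1) = 0"
    using \<open>0 \<le> ?Z 0\<close> \<open>0 \<le> ?Z (n - 1)\<close> by (meson antisym mult_nonneg_nonneg)
  moreover have "0 \<in> {..<n}" "n - 1 \<in> {..<n}"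
    using \<open>2 \<le> n\<close> by auto
  ultimately show ?thesis
    by (metis finite_lessThan mult_eq_0_iff prod_zero_iff)
qed

lemma return_path_trans_Z_le_trans_hatZ:
  fixes \<alpha> :: "nat \<Rightarrow> nat \<Rightarrow> real"
  assumes x: "x \<in> return_paths n" and "2 \<le> n"
    and alpha_prob: "\<And>t i. 0 \<le> \<alpha> t i \<and> \<alpha> t i \<le> 1"
    and "p \<le> 1" and "1/2 < p"
    and cond: "\<And>t s i j. (1 - \<alpha> t i) * \<alpha> s j \<le> p * (1 - p)"
  shows "(\<Prod>k<n. trans_Z \<alpha> (t + k) (x k) (x (Suc k)))
    \<le> (\<Prod>k<n. trans_hatZ p k (x k) (x (Suc k))) / p"
proof (cases "p = 1")
  case True
  have "(\<Prod>k<n. trans_Z \<alpha> (t + k) (x k) (x (Suc k))) = 0"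
    by (rule return_path_trans_Z_degenerate[OF x \<open>2 \<le> n\<close> alpha_prob]) (use cond True in simp)
  moreover have "0 \<le> (\<Prod>k<n. trans_hatZ p k (x k) (x (Suc k))) / p"
    using True by (simp add: prod_nonneg trans_hatZ_nonneg)
  ultimately show ?thesis
    by linarith
next
  case False
  let ?H = "\<Prod>k<n. trans_hatZ p k (x k) (x (Suc k))"
  have "0 < p" "p < 1"
    using \<open>1/2 < p\<close> \<open>p \<le> 1\<close> False by auto
  then obtain \<rho> where "0 < \<rho>" "\<And>t i. 1 - \<alpha> t i \<le> (1 - p) * \<rho>" "\<And>t i. \<alpha> t i * \<rho> \<le> p"
    using exists_comparison_potential[of \<alpha> p, OF alpha_prob _ _ cond] by blast
  then have "(\<Prod>k<n. trans_Z \<alpha> (t + k) (x k) (x (Suc k))) \<le> (1 - p) * ?H"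
    by (intro return_path_trans_Z_le_potential[OF x \<open>2 \<le> n\<close> _ alpha_prob])
  also have "\<dots> = (p * (1 - p)) * ?H / p"
    using \<open>0 < p\<close> by simp
  also have "\<dots> \<le> 1 * ?H / p"
    using \<open>0 < p\<close> \<open>p < 1\<close>
    by (intro divide_right_mono mult_right_mono mult_le_one) (auto simp: prod_nonneg trans_hatZ_nonneg)
  finally show ?thesis
    by simp
qed

lemma g_Z_le_g_hat:
  fixes \<alpha> :: "nat \<Rightarrow> nat \<Rightarrow> real"
  assumes alpha_prob: "\<And>t i. 0 \<le> \<alpha> t i \<and> \<alpha> t i \<le> 1"
    and p_le: "p \<le> 1" and p_gt: "1/2 < p"
    and cond: "\<And>t s i j. (1 - \<alpha> t i) * \<alpha> s j \<le> p * (1 - p)"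
    and "0 < n"
  shows "g_Z \<alpha> t n \<le> g_hat p n"
proof (cases "n = 1")
  case True
  then show ?thesis
    using g_Z_le_1[OF alpha_prob] by (simp add: g_hat_def)
next
  case False
  then have "2 \<le> n" using \<open>0 < n\<close> by simp
  have "g_Z \<alpha> t n \<le> (\<Sum>x\<in>return_paths n. (\<Prod>k<n. trans_hatZ p k (x k) (x (Suc k))) / p)"
    unfolding g_Z_def first_return_eq
    by (intro sum_mono return_path_trans_Z_le_trans_hatZ \<open>2 \<le> n\<close> alpha_prob cond p_le p_gt)
  also have "\<dots> = g_hat p n"
    using False by (simp add: g_hat_def f_hat_def first_return_eq sum_divide_distrib)
  finally show ?thesis .
qed

lemma exists_contracting_potential:
  assumes "p \<le> 1" and "1/2 < p"
  obtains \<mu> c :: real where "0 < \<mu>" "0 < c" "c < 1/2" "1 - p \<le> c * \<mu>" "p * \<mu> \<le> c"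
proof
  text \<open>Any \<open>\<mu>\<close> strictly between \<open>2 * (1 - p)\<close> and \<open>1 / (2 * p)\<close> works; these differ because
    \<open>4 * p * (1 - p) < 1\<close>, and we take their midpoint.\<close>
  define \<mu> where "\<mu> = (1 - p) + 1 / (4 * p)"
  define c where "c = max ((1 - p) / \<mu>) (p * \<mu>)"
  have "0 < p" using \<open>1/2 < p\<close> by simp
  have "4 * p * (1 - p) < 1"
    using \<open>1/2 < p\<close> power2_strict_mono[of 0 "2 * p - 1"]
    by (simp add: power2_eq_square algebra_simps)
  have "p * \<mu> = p * (1 - p) + 1/4"
    using \<open>0 < p\<close> by (simp add: \<mu>_def field_simps)
  with \<open>4 * p * (1 - p) < 1\<close> have "p * \<mu> < 1/2"
    by simp
  have "1 - p < 1 / (4 * p)"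
    using \<open>4 * p * (1 - p) < 1\<close> \<open>0 < p\<close> by (simp add: field_simps)
  then have "2 * (1 - p) < \<mu>"
    by (simp add: \<mu>_def)
  show "0 < \<mu>"
    unfolding \<mu>_def using \<open>p \<le> 1\<close> \<open>0 < p\<close> by (simp add: add_nonneg_pos)
  then show "0 < c"
    unfolding c_def using \<open>0 < p\<close> by (simp add: max.strict_coboundedI2)
  have "(1 - p) / \<mu> < 1/2"
    using \<open>2 * (1 - p) < \<mu>\<close> \<open>0 < \<mu>\<close> by (simp add: field_simps)
  with \<open>p * \<mu> < 1/2\<close> show "c < 1/2"
    unfolding c_def max_less_iff_conj by blast
  have "(1 - p) / \<mu> \<le> c"
    by (simp add: c_def)
  then show "1 - p \<le> c * \<mu>"
    using \<open>0 < \<mu>\<close> by (simp add: pos_divide_le_eq)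
  show "p * \<mu> \<le> c"
    by (simp add: c_def)
qed

lemma f_hat_le_geometric:
  assumes "p \<le> 1" and "1/2 < p"
  obtains K r :: real where "0 \<le> r" "r < 1" "\<And>n. 0 < n \<Longrightarrow> f_hat p n \<le> K * r ^ n"
proof -
  obtain \<mu> c :: real where "0 < \<mu>" "0 < c" "c < 1/2" and up: "1 - p \<le> c * \<mu>" and down: "p * \<mu> \<le> c"
    using exists_contracting_potential[OF assms] by blast
  have "f_hat p n \<le> 1 / (c * \<mu>) * (2 * c) ^ n" if "0 < n" for n
  proof -
    have "(\<Prod>k<n. trans_hatZ p k (x k) (x (Suc k)))
        \<le> 1 / (c * \<mu>) * (\<Prod>k<n. birth_death_kernel c c (x k) (x (Suc k)))"
      if x: "x \<in> return_paths n" for x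
    proof (rule return_path_prod_le[OF x \<open>0 < n\<close> \<open>0 < \<mu>\<close>])
      show "0 \<le> trans_hatZ p k i j" for k i j
        using assms by (simp add: trans_hatZ_nonneg)
      show "trans_hatZ p 0 0 (x 1) \<le> 1 / (c * \<mu>) * birth_death_kernel c c 0 (x 1) * \<mu> ^ x 1"
        using \<open>0 < c\<close> \<open>0 < \<mu>\<close> by (simp add: trans_hatZ_def birth_death_kernel_def)
      show "trans_hatZ p k i j * \<mu> ^ i \<le> birth_death_kernel c c i j * \<mu> ^ j" if "0 < i" for k i j
        using birth_death_kernel_weighted_le[OF that \<open>0 < \<mu>\<close> down up]
        by (simp add: trans_hatZ_eq_birth_death_kernel[OF that])
    qed
    then have "f_hat p n \<le> 1 / (c * \<mu>) * first_return (\<lambda>_. birth_death_kernel c c) 0 n"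
      unfolding f_hat_def first_return_eq by (simp add: sum_distrib_left sum_mono)
    also have "\<dots> \<le> 1 / (c * \<mu>) * (2 * c) ^ n"
      using \<open>0 < c\<close> \<open>0 < \<mu>\<close> sum_birth_death_kernel_le[of "{..n}" c c]
      by (intro mult_left_mono first_return_le_pow birth_death_kernel_nonneg) auto
    finally show ?thesis .
  qed
  moreover have "0 \<le> 2 * c" "2 * c < 1"
    using \<open>0 < c\<close> \<open>c < 1/2\<close> by auto
  ultimately show ?thesis
    using that by blast
qed

lemma summable_g_hat:
  assumes "p \<le> 1" and "1/2 < p"
  shows "summable (g_hat p)"
proof -
  obtain K r :: real where "0 \<le> r" "r < 1" and f_hat_le: "\<And>n. 0 < n \<Longrightarrow> f_hat p n \<le> K * r ^ n"
    using f_hat_le_geometric[OF assms] by blast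
  show ?thesis
  proof (rule summable_comparison_test')
    show "summable (\<lambda>n. K / p * r ^ n)"
      using \<open>0 \<le> r\<close> \<open>r < 1\<close> by (intro summable_mult summable_geometric) simp
    show "norm (g_hat p n) \<le> K / p * r ^ n" if "2 \<le> n" for n
    proof -
      have "0 \<le> f_hat p n"
        unfolding f_hat_def using assms by (intro first_return_nonneg trans_hatZ_nonneg) auto
      then show ?thesis
        using that f_hat_le[of n] assms by (simp add: g_hat_def divide_right_mono)
    qed
  qed
qed

theorem lemma2:
  fixes \<alpha> :: "nat \<Rightarrow> nat \<Rightarrow> real" and p :: real
  assumes alpha_prob: "\<And>t i. 0 \<le> \<alpha> t i \<and> \<alpha> t i \<le> 1"
    and p_le: "p \<le> 1"
    and p_gt: "p > 1/2"
    and cond: "\<And>t s i j. p * (1 - p) \<ge> (1 - \<alpha> t i) * \<alpha> s j"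
  shows "\<forall>t k. G_Z \<alpha> t k \<le> G_hat p k"
proof (intro allI)
  fix t k
  have le: "g_Z \<alpha> t (k + 1 + j) \<le> g_hat p (k + 1 + j)" for j
    by (rule g_Z_le_g_hat[OF alpha_prob p_le p_gt cond]) simp
  have "summable (\<lambda>j. g_hat p (j + (k + 1)))"
    using summable_g_hat[OF p_le p_gt] by (rule summable_ignore_initial_segment)
  then have summable_hat: "summable (\<lambda>j. g_hat p (k + 1 + j))"
    by (simp add: add.commute)
  have "summable (\<lambda>j. g_Z \<alpha> t (k + 1 + j))"
    by (rule summable_comparison_test'[OF summable_hat])
      (use le alpha_prob in \<open>simp add: g_Z_def first_return_nonneg trans_Z_nonneg\<close>)
  then show "G_Z \<alpha> t k \<le> G_hat p k"
    unfolding G_Z_def G_hat_def using le summable_hat by (intro suminf_le)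
qed

end
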